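(* Let $k$ be a field and $n\ge2$. Put $A_0=I_n$, $A_i=x^i$ for $1\le i\le n-1$, $B_i=\sum_{j=1}^{n-i-1}jE_{j+1,i+j+1}$ for $0\le i\le n-2$, and $C=\sum_{j=1}^{n-1}jE_{j+1,j}$. Then $$N(\mathrm{J}_n(k))=\begin{cases}\bigoplus_{i=0}^{n-1}kA_i\oplus\bigoplus_{i=0}^{n-2}kB_i & (\mathrm{ch}(k)\nmid n),\\ \bigoplus_{i=0}^{n-1}kA_i\oplus\bigoplus_{i=0}^{n-2}kB_i\oplus kC & (\mathrm{ch}(k)\mid n).\end{cases}$$ In particular $\dim_kN(\mathrm{J}_n(k))=2n-1$ if $\mathrm{ch}(k)\nmid n$ and $2n$ if $\mathrm{ch}(k)\mid n$.
   Context: $x=E_{12}+E_{23}+\cdots+E_{n-1,n}\in\mathrm{M}_n(k)$, where $E_{ij}$ are matrix units, and $\mathrm{J}_n(k)$ is the $k$-subalgebra generated by $x$. For a subalgebra $A\subseteq\mathrm{M}_n(k)$, $N(A)=\{z\in\mathrm{M}_n(k)\mid zy-yz\in A\text{ for all }y\in A\}$. *)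

theory Defs
  imports "Jordan_Normal_Form.Matrix"
begin

(* Matrices are n x n matrices of the JNF type 'a mat; indices are 0-based,
   so the paper's matrix unit E_{p,q} is the entry (p-1, q-1). *)

definition xmat :: "nat \<Rightarrow> 'k::field mat" where
  "xmat n = mat n n (\<lambda>(r, c). if c = r + 1 then 1 else 0)"

definition is_subalgebra :: "nat \<Rightarrow> 'k::field mat set \<Rightarrow> bool" where
  "is_subalgebra n S \<longleftrightarrow> S \<subseteq> carrier_mat n n \<and> 1\<^sub>m n \<in> S \<and> 0\<^sub>m n n \<in> S \<and>
     (\<forall>a\<in>S. \<forall>b\<in>S. a + b \<in> S) \<and> (\<forall>a\<in>S. \<forall>b\<in>S. a * b \<in> S) \<and>
     (\<forall>c. \<forall>a\<in>S. c \<cdot>\<^sub>m a \<in> S)"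

definition Jalg :: "nat \<Rightarrow> 'k::field mat set" where
  "Jalg n = \<Inter> {S. is_subalgebra n S \<and> xmat n \<in> S}"

definition Nrm :: "nat \<Rightarrow> 'k::field mat set \<Rightarrow> 'k mat set" where
  "Nrm n A = {z \<in> carrier_mat n n. \<forall>y\<in>A. z * y - y * z \<in> A}"

definition Amat :: "nat \<Rightarrow> nat \<Rightarrow> 'k::field mat" where
  "Amat n i = xmat n ^\<^sub>m i"

definition Bmat :: "nat \<Rightarrow> nat \<Rightarrow> 'k::field mat" where
  "Bmat n i = mat n n (\<lambda>(r, c). if c = r + i \<and> 1 \<le> r \<and> r \<le> n - i - 1 then of_nat r else 0)"

definition Cmat :: "nat \<Rightarrow> 'k::field mat" where
  "Cmat n = mat n n (\<lambda>(r, c). if r = c + 1 \<and> 1 \<le> r \<and> r \<le> n - 1 then of_nat r else 0)"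

definition lincomb :: "nat \<Rightarrow> (nat \<Rightarrow> 'k::field) \<Rightarrow> (nat \<Rightarrow> 'k) \<Rightarrow> 'k \<Rightarrow> 'k mat" where
  "lincomb n a b c = mat n n (\<lambda>p. (\<Sum>i<n. a i * Amat n i $$ p) + (\<Sum>i<n-1. b i * Bmat n i $$ p) + c * Cmat n $$ p)"

end

theory Submission
  imports Defs
begin

text \<open>
  \<open>J\<^sub>n(k)\<close> is the algebra of upper triangular Toeplitz matrices. Since \<open>y \<mapsto> zy - yz\<close> is a
  derivation, \<open>z\<close> normalizes the algebra generated by \<open>x\<close> as soon as \<open>zx - xz\<close> lies in it,
  i.e. is upper triangular Toeplitz. The \<open>(r, c)\<close> entry of \<open>zx - xz\<close> is
  \<open>z(r, c-1) - z(r+1, c)\<close>, so this condition propagates the entries of \<open>z\<close> along its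
  diagonals: \<open>z\<close> is determined by its first row, the differences between its first two rows
  and the subdiagonal entry \<open>\<gamma> = z(1, 0)\<close>; the subdiagonal is then \<open>\<gamma>, 2\<gamma>, \<dots>, (n-1)\<gamma>\<close>,
  and the last diagonal entry of \<open>zx - xz\<close> forces \<open>n\<gamma> = 0\<close>.
\<close>

lemma index_mult_mat_sum:
  assumes "A \<in> carrier_mat n n" "B \<in> carrier_mat n n" "i < n" "j < n"
  shows "(A * B) $$ (i, j) = (\<Sum>k<n. A $$ (i, k) * B $$ (k, j))"
  using assms by (auto simp: scalar_prod_def lessThan_atLeast0 intro!: sum.cong)

section \<open>Normalizers of generated subalgebras\<close>

definition generated_subalgebra :: "nat \<Rightarrow> 'k::field mat \<Rightarrow> 'k mat set" where
  "generated_subalgebra n g = \<Inter> {S. is_subalgebra n S \<and> g \<in> S}"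

lemma Jalg_eq_generated_subalgebra: "Jalg n = generated_subalgebra n (xmat n)"
  by (simp add: Jalg_def generated_subalgebra_def)

lemma is_subalgebraD:
  assumes "is_subalgebra n S"
  shows "S \<subseteq> carrier_mat n n" "1\<^sub>m n \<in> S" "0\<^sub>m n n \<in> S" "a \<in> S \<Longrightarrow> b \<in> S \<Longrightarrow> a + b \<in> S"
    "a \<in> S \<Longrightarrow> b \<in> S \<Longrightarrow> a * b \<in> S" "a \<in> S \<Longrightarrow> c \<cdot>\<^sub>m a \<in> S"
  using assms unfolding is_subalgebra_def by blast+

lemma is_subalgebra_carrier_mat: "is_subalgebra n (carrier_mat n n :: 'k::field mat set)"
  by (auto simp: is_subalgebra_def)

lemma is_subalgebra_Inter:
  assumes "F \<noteq> {}" "\<And>S. S \<in> F \<Longrightarrow> is_subalgebra n S"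
  shows "is_subalgebra n (\<Inter> F)"
  using assms unfolding is_subalgebra_def by blast

lemma is_subalgebra_generated_subalgebra:
  "g \<in> carrier_mat n n \<Longrightarrow> is_subalgebra n (generated_subalgebra n g)"
  unfolding generated_subalgebra_def
  using is_subalgebra_carrier_mat by (intro is_subalgebra_Inter) auto

lemma generated_subalgebra_least:
  "is_subalgebra n S \<Longrightarrow> g \<in> S \<Longrightarrow> generated_subalgebra n g \<subseteq> S"
  unfolding generated_subalgebra_def by blast

lemma generator_in_generated_subalgebra: "g \<in> generated_subalgebra n g"
  unfolding generated_subalgebra_def by blast

lemma commutator_add_right:
  fixes z a b :: "'k::field mat"
  assumes "z \<in> carrier_mat n n" "a \<in> carrier_mat n n" "b \<in> carrier_mat n n"
  shows "z * (a + b) - (a + b) * z = (z * a - a * z) + (z * b - b * z)"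
proof -
  have "z * (a + b) - (a + b) * z = (z * a + z * b) - (a * z + b * z)"
    using assms by (simp add: mult_add_distrib_mat[of _ n n] add_mult_distrib_mat[of _ n n])
  also have "\<dots> = (z * a - a * z) + (z * b - b * z)"
    using assms by (intro eq_matI) auto
  finally show ?thesis .
qed

lemma commutator_mult_right:
  fixes z a b :: "'k::field mat"
  assumes "z \<in> carrier_mat n n" "a \<in> carrier_mat n n" "b \<in> carrier_mat n n"
  shows "z * (a * b) - a * b * z = (z * a - a * z) * b + a * (z * b - b * z)"
proof -
  have "(z * a - a * z) * b = z * a * b - a * z * b"
    using assms by (intro minus_mult_distrib_mat[of _ n n]) auto
  moreover have "a * (z * b - b * z) = a * (z * b) - a * (b * z)"
    using assms by (intro mult_minus_distrib_mat[of _ n n]) auto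
  moreover have "(z * a * b - a * z * b) + (a * (z * b) - a * (b * z)) = z * a * b - a * b * z"
    using assms by (intro eq_matI) (auto simp: assoc_mult_mat[of _ n n])
  ultimately show ?thesis
    using assms by (simp add: assoc_mult_mat[of _ n n])
qed

lemma commutator_smult_right:
  fixes z a :: "'k::field mat"
  assumes "z \<in> carrier_mat n n" "a \<in> carrier_mat n n"
  shows "z * (c \<cdot>\<^sub>m a) - (c \<cdot>\<^sub>m a) * z = c \<cdot>\<^sub>m (z * a - a * z)"
  using assms
  by (intro eq_matI) (auto simp: mult_smult_distrib[of _ n n] mult_smult_assoc_mat[of _ n n] algebra_simps)

lemma Nrm_generated_subalgebra_iff:
  fixes g z :: "'k::field mat"
  assumes g: "g \<in> carrier_mat n n"
  shows "z \<in> Nrm n (generated_subalgebra n g) \<longleftrightarrow>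
    z \<in> carrier_mat n n \<and> z * g - g * z \<in> generated_subalgebra n g"
proof
  assume "z \<in> Nrm n (generated_subalgebra n g)"
  then show "z \<in> carrier_mat n n \<and> z * g - g * z \<in> generated_subalgebra n g"
    unfolding Nrm_def using generator_in_generated_subalgebra by blast
next
  let ?A = "generated_subalgebra n g"
  assume "z \<in> carrier_mat n n \<and> z * g - g * z \<in> ?A"
  then have z: "z \<in> carrier_mat n n" and zg: "z * g - g * z \<in> ?A" by auto
  have A: "is_subalgebra n ?A" by (rule is_subalgebra_generated_subalgebra[OF g])
  define S where "S = {y \<in> ?A. z * y - y * z \<in> ?A}"
  have "is_subalgebra n S"
    unfolding is_subalgebra_def
  proof (intro conjI ballI allI)
    show "S \<subseteq> carrier_mat n n" unfolding S_def using is_subalgebraD(1)[OF A] by blast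
    have "z * 1\<^sub>m n - 1\<^sub>m n * z = 0\<^sub>m n n" using z by simp
    then show "1\<^sub>m n \<in> S" unfolding S_def using is_subalgebraD(2,3)[OF A] by simp
    have "z * 0\<^sub>m n n - 0\<^sub>m n n * z = 0\<^sub>m n n" using z by simp
    then show "0\<^sub>m n n \<in> S" unfolding S_def using is_subalgebraD(3)[OF A] by simp
  next
    fix a b assume "a \<in> S" "b \<in> S"
    then have a: "a \<in> ?A" "z * a - a * z \<in> ?A" and b: "b \<in> ?A" "z * b - b * z \<in> ?A"
      unfolding S_def by auto
    have ab: "a \<in> carrier_mat n n" "b \<in> carrier_mat n n"
      using a(1) b(1) is_subalgebraD(1)[OF A] by auto
    show "a + b \<in> S" unfolding S_def
      using commutator_add_right[OF z ab] is_subalgebraD(4)[OF A] a b by simp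
    show "a * b \<in> S" unfolding S_def
      using commutator_mult_right[OF z ab] is_subalgebraD(4,5)[OF A] a b by simp
  next
    fix c a assume "a \<in> S"
    then have a: "a \<in> ?A" "z * a - a * z \<in> ?A" unfolding S_def by auto
    then have "a \<in> carrier_mat n n" using is_subalgebraD(1)[OF A] by auto
    then show "c \<cdot>\<^sub>m a \<in> S" unfolding S_def
      using commutator_smult_right[OF z] is_subalgebraD(6)[OF A] a by simp
  qed
  moreover have "g \<in> S" unfolding S_def using zg generator_in_generated_subalgebra by simp
  ultimately have "?A \<subseteq> S" by (rule generated_subalgebra_least)
  then show "z \<in> Nrm n ?A" unfolding Nrm_def S_def using z by blast
qed

section \<open>Upper triangular Toeplitz matrices\<close>

definition upper_toeplitz :: "nat \<Rightarrow> (nat \<Rightarrow> 'k::field) \<Rightarrow> 'k mat" where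
  "upper_toeplitz n f = mat n n (\<lambda>(i, j). if i \<le> j then f (j - i) else 0)"

lemma dim_upper_toeplitz [simp]:
  "dim_row (upper_toeplitz n f) = n" "dim_col (upper_toeplitz n f) = n"
  by (simp_all add: upper_toeplitz_def)

lemma upper_toeplitz_carrier [simp]: "upper_toeplitz n f \<in> carrier_mat n n"
  by (simp add: upper_toeplitz_def)

lemma index_upper_toeplitz:
  "i < n \<Longrightarrow> j < n \<Longrightarrow> upper_toeplitz n f $$ (i, j) = (if i \<le> j then f (j - i) else 0)"
  by (simp add: upper_toeplitz_def)

lemma upper_toeplitz_eqI:
  assumes "A \<in> carrier_mat n n"
    and "\<And>i j. i < n \<Longrightarrow> j < n \<Longrightarrow> A $$ (i, j) = (if i \<le> j then f (j - i) else 0)"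
  shows "A = upper_toeplitz n f"
  using assms by (intro eq_matI) (auto simp: index_upper_toeplitz)

lemma upper_toeplitz_mult:
  "upper_toeplitz n f * upper_toeplitz n g = upper_toeplitz n (\<lambda>d. \<Sum>e\<le>d. f e * g (d - e))"
proof (rule upper_toeplitz_eqI)
  fix i j assume ij: "i < n" "j < n"
  have "(upper_toeplitz n f * upper_toeplitz n g) $$ (i, j)
      = (\<Sum>k<n. if k \<in> {i..j} then f (k - i) * g (j - k) else 0)"
    using ij by (subst index_mult_mat_sum[of _ n]) (auto simp: index_upper_toeplitz intro!: sum.cong)
  also have "\<dots> = (\<Sum>k\<in>{i..j}. f (k - i) * g (j - k))"
    using ij by (subst sum.inter_restrict[symmetric]) (auto intro!: sum.cong)
  also have "\<dots> = (if i \<le> j then \<Sum>e\<le>j - i. f e * g (j - i - e) else 0)"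
  proof (cases "i \<le> j")
    case True
    have "(\<Sum>k\<in>{i..j}. f (k - i) * g (j - k)) = (\<Sum>e\<in>{0..j - i}. f e * g (j - (e + i)))"
      using sum.shift_bounds_cl_nat_ivl[of "\<lambda>k. f (k - i) * g (j - k)" 0 i "j - i"] True by simp
    then show ?thesis using True by (simp add: atMost_atLeast0 add.commute)
  qed simp
  finally show "(upper_toeplitz n f * upper_toeplitz n g) $$ (i, j) =
      (if i \<le> j then \<Sum>e\<le>j - i. f e * g (j - i - e) else 0)" .
qed (rule mult_carrier_mat[OF upper_toeplitz_carrier upper_toeplitz_carrier])

lemma upper_toeplitz_add: "upper_toeplitz n f + upper_toeplitz n g = upper_toeplitz n (\<lambda>d. f d + g d)"
  by (intro eq_matI) (auto simp: index_upper_toeplitz)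

lemma upper_toeplitz_smult: "c \<cdot>\<^sub>m upper_toeplitz n f = upper_toeplitz n (\<lambda>d. c * f d)"
  by (intro eq_matI) (auto simp: index_upper_toeplitz)

lemma one_mat_eq_upper_toeplitz: "1\<^sub>m n = upper_toeplitz n (\<lambda>d. if d = 0 then 1 else 0)"
  by (intro eq_matI) (auto simp: index_upper_toeplitz)

lemma zero_mat_eq_upper_toeplitz: "0\<^sub>m n n = upper_toeplitz n (\<lambda>d. 0)"
  by (intro eq_matI) (auto simp: index_upper_toeplitz)

lemma is_subalgebra_upper_toeplitz: "is_subalgebra n (range (upper_toeplitz n) :: 'k::field mat set)"
  unfolding is_subalgebra_def
  by (auto simp: one_mat_eq_upper_toeplitz zero_mat_eq_upper_toeplitz upper_toeplitz_add
      upper_toeplitz_mult upper_toeplitz_smult)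

section \<open>The nilpotent Jordan block\<close>

lemma dim_xmat [simp]: "dim_row (xmat n) = n" "dim_col (xmat n) = n"
  by (simp_all add: xmat_def)

lemma xmat_carrier [simp]: "xmat n \<in> carrier_mat n n"
  by (simp add: xmat_def)

lemma index_xmat: "i < n \<Longrightarrow> j < n \<Longrightarrow> xmat n $$ (i, j) = (if j = i + 1 then 1 else 0)"
  by (simp add: xmat_def)

lemma index_mult_xmat_right:
  assumes z: "z \<in> carrier_mat n n" and ij: "i < n" "j < n"
  shows "(z * xmat n) $$ (i, j) = (if 1 \<le> j then z $$ (i, j - 1) else 0)"
proof -
  have "(z * xmat n) $$ (i, j) = (\<Sum>k<n. z $$ (i, k) * xmat n $$ (k, j))"
    by (rule index_mult_mat_sum[OF z xmat_carrier ij])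
  also have "\<dots> = (\<Sum>k<n. if k = j - 1 \<and> 1 \<le> j then z $$ (i, k) else 0)"
    using ij by (intro sum.cong) (auto simp: index_xmat)
  finally show ?thesis
    using ij by (cases "1 \<le> j") auto
qed

lemma index_mult_xmat_left:
  assumes z: "z \<in> carrier_mat n n" and ij: "i < n" "j < n"
  shows "(xmat n * z) $$ (i, j) = (if i + 1 < n then z $$ (i + 1, j) else 0)"
proof -
  have "(xmat n * z) $$ (i, j) = (\<Sum>k<n. xmat n $$ (i, k) * z $$ (k, j))"
    by (rule index_mult_mat_sum[OF xmat_carrier z ij])
  also have "\<dots> = (\<Sum>k<n. if k = i + 1 then z $$ (k, j) else 0)"
    using ij by (intro sum.cong) (auto simp: index_xmat)
  finally show ?thesis by auto
qed

lemma index_commutator_xmat: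
  assumes z: "z \<in> carrier_mat n n" and ij: "i < n" "j < n"
  shows "(z * xmat n - xmat n * z) $$ (i, j) =
    (if 1 \<le> j then z $$ (i, j - 1) else 0) - (if i + 1 < n then z $$ (i + 1, j) else 0)"
  using z ij index_mult_xmat_right[OF z ij] index_mult_xmat_left[OF z ij] by simp

lemma xmat_pow_eq_upper_toeplitz:
  "(xmat n :: 'k::field mat) ^\<^sub>m k = upper_toeplitz n (\<lambda>d. if d = k then 1 else 0)"
proof (induction k)
  case 0
  show ?case by (simp add: one_mat_eq_upper_toeplitz)
next
  case (Suc k)
  show ?case
  proof (rule upper_toeplitz_eqI)
    fix i j assume ij: "i < n" "j < n"
    have "((xmat n :: 'k mat) ^\<^sub>m Suc k) $$ (i, j) = (if 1 \<le> j then (xmat n ^\<^sub>m k) $$ (i, j - 1) else 0)"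
      using index_mult_xmat_right[of "(xmat n :: 'k mat) ^\<^sub>m k" n i j] ij by simp
    then show "((xmat n :: 'k mat) ^\<^sub>m Suc k) $$ (i, j) = (if i \<le> j then (if j - i = Suc k then 1 else 0) else 0)"
      using ij by (auto simp: Suc.IH index_upper_toeplitz)
  qed (rule pow_carrier_mat[OF xmat_carrier])
qed

lemma xmat_eq_upper_toeplitz: "xmat n = upper_toeplitz n (\<lambda>d. if d = 1 then 1 else 0)"
  using xmat_pow_eq_upper_toeplitz[of n 1] by simp

lemma upper_toeplitz_in_subalgebra:
  assumes S: "is_subalgebra n S" and x: "xmat n \<in> S"
  shows "upper_toeplitz n f \<in> S"
proof -
  have pow: "xmat n ^\<^sub>m k \<in> S" for k
    by (induction k) (auto intro: is_subalgebraD(2,5)[OF S] x)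
  have "upper_toeplitz n (\<lambda>d. if d < m then f d else 0) \<in> S" for m
    \<comment> \<open>the partial sums of \<open>\<Sum>\<^sub>d f(d) x\<^sup>d\<close>\<close>
  proof (induction m)
    case 0
    then show ?case using is_subalgebraD(3)[OF S] by (simp add: zero_mat_eq_upper_toeplitz)
  next
    case (Suc m)
    have "upper_toeplitz n (\<lambda>d. if d < Suc m then f d else 0)
        = upper_toeplitz n (\<lambda>d. if d < m then f d else 0) + f m \<cdot>\<^sub>m (xmat n ^\<^sub>m m)"
      by (simp add: xmat_pow_eq_upper_toeplitz upper_toeplitz_smult upper_toeplitz_add)
        (intro arg_cong[where f = "upper_toeplitz n"] ext, auto simp: less_Suc_eq)
    then show ?case using Suc is_subalgebraD(4,6)[OF S] pow by simp
  qed
  moreover have "upper_toeplitz n f = upper_toeplitz n (\<lambda>d. if d < n then f d else 0)"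
    by (intro eq_matI) (auto simp: index_upper_toeplitz)
  ultimately show ?thesis by simp
qed

lemma Jalg_eq_range_upper_toeplitz: "Jalg n = (range (upper_toeplitz n) :: 'k::field mat set)"
proof
  show "Jalg n \<subseteq> (range (upper_toeplitz n) :: 'k mat set)"
    unfolding Jalg_eq_generated_subalgebra
    by (rule generated_subalgebra_least[OF is_subalgebra_upper_toeplitz])
      (simp add: xmat_eq_upper_toeplitz)
  show "range (upper_toeplitz n) \<subseteq> (Jalg n :: 'k mat set)"
    unfolding Jalg_def by (auto intro: upper_toeplitz_in_subalgebra)
qed

lemma Nrm_Jalg_iff:
  "z \<in> Nrm n (Jalg n) \<longleftrightarrow>
    z \<in> carrier_mat n n \<and> (\<exists>t. z * xmat n - xmat n * z = upper_toeplitz n t)"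
  using Nrm_generated_subalgebra_iff[OF xmat_carrier, where z = z]
  by (auto simp flip: Jalg_eq_generated_subalgebra simp: Jalg_eq_range_upper_toeplitz)

section \<open>The normalizer of \<open>J\<^sub>n(k)\<close>\<close>

lemma dim_lincomb [simp]: "dim_row (lincomb n a b c) = n" "dim_col (lincomb n a b c) = n"
  by (simp_all add: lincomb_def)

lemma lincomb_carrier [simp]: "lincomb n a b c \<in> carrier_mat n n"
  unfolding carrier_mat_def by simp

lemma index_Bmat:
  "i < n \<Longrightarrow> j < n \<Longrightarrow>
    Bmat n k $$ (i, j) = (if j = i + k \<and> 1 \<le> i \<and> i \<le> n - k - 1 then of_nat i else 0)"
  by (simp add: Bmat_def)

lemma index_Cmat:
  "i < n \<Longrightarrow> j < n \<Longrightarrow> Cmat n $$ (i, j) = (if i = j + 1 \<and> 1 \<le> i \<and> i \<le> n - 1 then of_nat i else 0)"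
  by (simp add: Cmat_def)

lemma index_lincomb:
  assumes ij: "i < n" "j < n"
  shows "lincomb n a b c $$ (i, j) =
    (if i \<le> j then a (j - i) + (if j - i < n - 1 then of_nat i * b (j - i) else 0)
     else if i = j + 1 then of_nat i * c else 0)"
proof -
  have "(\<Sum>k<n. a k * Amat n k $$ (i, j)) = (\<Sum>k<n. if k = j - i \<and> i \<le> j then a k else 0)"
    using ij by (intro sum.cong) (auto simp: Amat_def xmat_pow_eq_upper_toeplitz index_upper_toeplitz)
  then have A: "(\<Sum>k<n. a k * Amat n k $$ (i, j)) = (if i \<le> j then a (j - i) else 0)"
    using ij by (cases "i \<le> j") auto
  have "(\<Sum>k<n-1. b k * Bmat n k $$ (i, j)) = (\<Sum>k<n-1. if k = j - i \<and> i \<le> j then of_nat i * b k else 0)"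
    using ij by (intro sum.cong refl) (cases "i = 0"; auto simp: index_Bmat)
  then have B: "(\<Sum>k<n-1. b k * Bmat n k $$ (i, j)) =
      (if i \<le> j \<and> j - i < n - 1 then of_nat i * b (j - i) else 0)"
    using ij by (cases "i \<le> j") auto
  have C: "c * Cmat n $$ (i, j) = (if i = j + 1 then of_nat i * c else 0)"
    using ij by (auto simp: index_Cmat)
  show ?thesis
    using ij A B C by (simp add: lincomb_def)
qed

context
  fixes n :: nat and z :: "'k::field mat" and t :: "nat \<Rightarrow> 'k"
  assumes z_carrier: "z \<in> carrier_mat n n"
    and commutator_eq: "z * xmat n - xmat n * z = upper_toeplitz n t"
begin

lemma toeplitz_commutator_entry:
  "i < n \<Longrightarrow> j < n \<Longrightarrow>
    (if 1 \<le> j then z $$ (i, j - 1) else 0) - (if i + 1 < n then z $$ (i + 1, j) else 0) =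
    (if i \<le> j then t (j - i) else 0)"
  using index_commutator_xmat[OF z_carrier] commutator_eq index_upper_toeplitz by metis

lemma toeplitz_commutator_diagonal:
  "i + d < n \<Longrightarrow> z $$ (i, i + d) = z $$ (0, d) - of_nat i * t (d + 1)"
proof (induction i)
  case (Suc i)
  have "z $$ (i, i + d) - z $$ (i + 1, i + d + 1) = t (d + 1)"
    using toeplitz_commutator_entry[of i "i + d + 1"] Suc.prems by simp
  then show ?case using Suc by (simp add: algebra_simps)
qed simp

lemma toeplitz_commutator_subdiagonal:
  "i + 1 < n \<Longrightarrow> z $$ (i + 1, i) = - of_nat (i + 1) * t 0"
proof (induction i)
  case 0
  then show ?case using toeplitz_commutator_entry[of 0 0] by (simp add: equation_minus_iff)
next
  case (Suc i)
  have "z $$ (i + 1, i) - z $$ (i + 2, i + 1) = t 0"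
    using toeplitz_commutator_entry[of "i + 1" "i + 1"] Suc.prems by simp
  then show ?case using Suc by (simp add: algebra_simps eq_neg_iff_add_eq_0)
qed

lemma toeplitz_commutator_below_subdiagonal:
  "j + 2 \<le> i \<Longrightarrow> i < n \<Longrightarrow> z $$ (i, j) = 0"
proof (induction j arbitrary: i)
  case 0
  then show ?case using toeplitz_commutator_entry[of "i - 1" 0] by simp
next
  case (Suc j)
  have "z $$ (i - 1, j) - z $$ (i, Suc j) = 0"
    using toeplitz_commutator_entry[of "i - 1" "Suc j"] Suc.prems by simp
  then show ?case using Suc by simp
qed

text \<open>This is \<open>tr (zx - xz) = n t(0) = 0\<close>, read off the last diagonal entry.\<close>

lemma toeplitz_commutator_char: "of_nat n * t 0 = 0"
proof (cases n)
  case (Suc m)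
  have "(if 1 \<le> m then z $$ (m, m - 1) else 0) = t 0"
    using toeplitz_commutator_entry[of m m] Suc by simp
  moreover have "(if 1 \<le> m then z $$ (m, m - 1) else 0) = - of_nat m * t 0"
    using toeplitz_commutator_subdiagonal[of "m - 1"] Suc by (cases "m = 0") auto
  ultimately have "t 0 = - (of_nat m * t 0)" by simp
  then have "t 0 + of_nat m * t 0 = 0" by (simp only: eq_neg_iff_add_eq_0)
  then show ?thesis
    using Suc by (simp add: algebra_simps)
qed simp

lemma toeplitz_commutator_eq_lincomb:
  "z = lincomb n (\<lambda>d. z $$ (0, d)) (\<lambda>d. z $$ (1, 1 + d) - z $$ (0, d)) (z $$ (1, 0))"
  (is "z = ?L")
proof (rule eq_matI)
  fix i j assume "i < dim_row ?L" "j < dim_col ?L"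
  then have ij: "i < n" "j < n" by simp_all
  consider (upper) "i \<le> j" | (sub) "i = j + 1" | (lower) "j + 2 \<le> i" by linarith
  then show "z $$ (i, j) = ?L $$ (i, j)"
  proof cases
    case upper
    define d where "d = j - i"
    have zij: "z $$ (i, j) = z $$ (0, d) - of_nat i * t (d + 1)"
      using toeplitz_commutator_diagonal[of i d] ij upper by (simp add: d_def)
    show ?thesis
    proof (cases "d < n - 1")
      case True
      have "z $$ (1, 1 + d) - z $$ (0, d) = - t (d + 1)"
        using toeplitz_commutator_diagonal[of 1 d] True by simp
      then show ?thesis using zij True upper ij by (simp add: index_lincomb d_def)
    next
      case False
      then have "i = 0" using ij upper by (simp add: d_def)
      then show ?thesis using ij by (simp add: index_lincomb)
    qed
  next
    case sub
    then show ?thesis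
      using toeplitz_commutator_subdiagonal[of j] toeplitz_commutator_subdiagonal[of 0] ij
      by (simp add: index_lincomb algebra_simps)
  next
    case lower
    then show ?thesis using toeplitz_commutator_below_subdiagonal ij by (simp add: index_lincomb)
  qed
qed (use z_carrier in auto)

end

lemma commutator_xmat_lincomb:
  assumes "of_nat n * c = 0"
  shows "lincomb n a b c * xmat n - xmat n * lincomb n a b c =
    upper_toeplitz n (\<lambda>d. if d = 0 then - c else - b (d - 1))"
proof (rule upper_toeplitz_eqI)
  fix i j assume ij: "i < n" "j < n"
  let ?z = "lincomb n a b c"
  have D: "(?z * xmat n - xmat n * ?z) $$ (i, j) =
      (if 1 \<le> j then ?z $$ (i, j - 1) else 0) - (if i + 1 < n then ?z $$ (i + 1, j) else 0)"
    by (rule index_commutator_xmat[OF lincomb_carrier ij])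
  consider (above) "i < j" | (diagonal) "i = j" | (below) "j < i" by linarith
  then show "(?z * xmat n - xmat n * ?z) $$ (i, j) =
      (if i \<le> j then if j - i = 0 then - c else - b (j - i - 1) else 0)"
  proof cases
    case above
    then have "j - 1 - i = j - i - 1" "j - i - 1 < n - 1" "i + 1 < n" "i \<le> j - 1" "i + 1 \<le> j"
      using ij by auto
    then show ?thesis using above ij unfolding D by (simp add: index_lincomb algebra_simps)
  next
    case diagonal
    have left: "(if 1 \<le> j then ?z $$ (j, j - 1) else 0) = of_nat j * c"
      using ij by (cases "j = 0") (auto simp: index_lincomb)
    have right: "(if j + 1 < n then ?z $$ (j + 1, j) else 0) = of_nat j * c + c"
    proof (cases "j + 1 < n")
      case False
      then have "n = j + 1" using ij by simp
      then show ?thesis using assms by (simp add: algebra_simps)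
    qed (simp add: index_lincomb algebra_simps)
    show ?thesis using D unfolding diagonal left right by simp
  next
    case below
    then show ?thesis using ij unfolding D by (auto simp: index_lincomb)
  qed
qed (rule minus_carrier_mat, rule mult_carrier_mat[OF xmat_carrier lincomb_carrier])

lemma lincomb_eq_zeroD:
  assumes "2 \<le> n" and "lincomb n a b c = (0\<^sub>m n n :: 'k::field mat)"
  shows "(\<forall>i<n. a i = 0) \<and> (\<forall>i<n-1. b i = 0) \<and> c = 0"
proof -
  have entry: "lincomb n a b c $$ (i, j) = 0" if "i < n" "j < n" for i j
    using assms(2) that by simp
  have a: "a i = 0" if "i < n" for i
    using entry[of 0 i] that by (simp add: index_lincomb split: if_splits)
  have "b i = 0" if "i < n - 1" for i
    using entry[of 1 "1 + i"] that a[of i] by (simp add: index_lincomb)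
  moreover have "c = 0"
    using entry[of 1 0] assms(1) by (simp add: index_lincomb)
  ultimately show ?thesis using a by blast
qed

lemma Nrm_Jalg_eq_lincomb:
  assumes "2 \<le> n"
  shows "Nrm n (Jalg n) = {lincomb n a b c | a b c. of_nat n * (c :: 'k::field) = 0}"
proof (intro equalityI subsetI)
  fix z :: "'k mat" assume "z \<in> Nrm n (Jalg n)"
  then obtain t where z: "z \<in> carrier_mat n n" and t: "z * xmat n - xmat n * z = upper_toeplitz n t"
    by (auto simp: Nrm_Jalg_iff)
  have "z $$ (1, 0) = - t 0"
    using toeplitz_commutator_subdiagonal[OF z t, of 0] assms by simp
  then have "of_nat n * z $$ (1, 0) = 0"
    using toeplitz_commutator_char[OF z t] by simp
  then show "z \<in> {lincomb n a b c | a b c. of_nat n * c = 0}"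
    using toeplitz_commutator_eq_lincomb[OF z t] by blast
next
  fix z assume "z \<in> {lincomb n a b c | a b c. of_nat n * (c :: 'k) = 0}"
  then obtain a b c where z: "z = lincomb n a b c" and c: "of_nat n * c = 0" by blast
  show "z \<in> Nrm n (Jalg n)"
    unfolding Nrm_Jalg_iff z using commutator_xmat_lincomb[OF c] by auto
qed

theorem proposition4p21:
  fixes n :: nat
  assumes "n \<ge> 2"
  shows "(\<not> CHAR('k::field) dvd n \<longrightarrow>
            Nrm n (Jalg n :: 'k mat set) = {lincomb n a b 0 | a b. True} \<and>
            (\<forall>a b. lincomb n a b (0::'k) = 0\<^sub>m n n \<longrightarrow> (\<forall>i<n. a i = 0) \<and> (\<forall>i<n-1. b i = 0)))
       \<and> (CHAR('k) dvd n \<longrightarrow>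
            Nrm n (Jalg n :: 'k mat set) = {lincomb n a b c | a b c. True} \<and>
            (\<forall>a b c. lincomb n a b (c::'k) = 0\<^sub>m n n \<longrightarrow> (\<forall>i<n. a i = 0) \<and> (\<forall>i<n-1. b i = 0) \<and> c = 0))"
proof -
  note Nrm_eq = Nrm_Jalg_eq_lincomb[OF assms, where 'k = 'k]
  note independent = lincomb_eq_zeroD[OF assms, where 'k = 'k]
  show ?thesis
  proof (intro conjI impI)
    assume "\<not> CHAR('k) dvd n"
    then have "(of_nat n :: 'k) \<noteq> 0" by (simp add: of_nat_eq_0_iff_char_dvd)
    then show "Nrm n (Jalg n :: 'k mat set) = {lincomb n a b 0 | a b. True}"
      unfolding Nrm_eq by auto
    show "\<forall>a b. lincomb n a b (0::'k) = 0\<^sub>m n n \<longrightarrow> (\<forall>i<n. a i = 0) \<and> (\<forall>i<n-1. b i = 0)"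
      using independent by simp
  next
    assume "CHAR('k) dvd n"
    then have "(of_nat n :: 'k) = 0" by (simp add: of_nat_eq_0_iff_char_dvd)
    then show "Nrm n (Jalg n :: 'k mat set) = {lincomb n a b c | a b c. True}"
      unfolding Nrm_eq by simp
    show "\<forall>a b c. lincomb n a b (c::'k) = 0\<^sub>m n n \<longrightarrow> (\<forall>i<n. a i = 0) \<and> (\<forall>i<n-1. b i = 0) \<and> c = 0"
      using independent by simp
  qed
qed

end
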